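(* No nonzero $E$-linear code of length $2n$ is both left symplectic nice and right symplectic nice.
   Context: $E=\langle \kappa,\tau \mid 2\kappa=2\tau=0,\ \kappa^2=\kappa,\ \tau^2=\tau,\ \kappa\tau=\kappa,\ \tau\kappa=\tau\rangle$ is the non-unital ring $\{0,\kappa,\tau,\zeta\}$ ($|E|=4$), $\zeta=\kappa+\tau$, with $e\kappa=e\tau=e$, $e\zeta=0$ for all $e\in E$. An $E$-linear code of length $2n$ is a left $E$-submodule $C\subseteq E^{2n}$. Symplectic inner product: for $x=(u|v),y=(u'|v')\in E^{2n}$, $\langle x,y\rangle_s=\sum_i u_iv'_i+\sum_i v_iu'_i$. $C^{\perp_{S_L}}=\{z\in E^{2n}:\langle z,w\rangle_s=0\ \forall w\in C\}$, $C^{\perp_{S_R}}=\{z\in E^{2n}:\langle w,z\rangle_s=0\ \forall w\in C\}$. $C$ is left (resp. right) symplectic nice if $|C|\,|C^{\perp_{S_L}}|=|E|^{2n}$ (resp. $|C|\,|C^{\perp_{S_R}}|=|E|^{2n}$). *)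

theory Defs
  imports Main
begin

text \<open>The non-unital ring E = {0, kappa, tau, zeta}, zeta = kappa + tau, characteristic 2,
  with multiplication e*kappa = e*tau = e, e*zeta = 0 (and e*0 = 0).\<close>

datatype E = EZ | EK | ET | EZt

fun E_add :: "E \<Rightarrow> E \<Rightarrow> E" where
  "E_add EZ y = y"
| "E_add x EZ = x"
| "E_add EK EK = EZ" | "E_add EK ET = EZt" | "E_add EK EZt = ET"
| "E_add ET EK = EZt" | "E_add ET ET = EZ" | "E_add ET EZt = EK"
| "E_add EZt EK = ET" | "E_add EZt ET = EK" | "E_add EZt EZt = EZ"

fun E_mul :: "E \<Rightarrow> E \<Rightarrow> E" where
  "E_mul x EK = x"
| "E_mul x ET = x"
| "E_mul x EZt = EZ"
| "E_mul x EZ = EZ"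

instantiation E :: comm_monoid_add
begin
definition zero_E :: E where "zero_E = EZ"
definition plus_E :: "E \<Rightarrow> E \<Rightarrow> E" where "plus_E = E_add"
instance
proof
  fix a b c :: E
  show "a + b + c = a + (b + c)" unfolding plus_E_def
    by (cases a; cases b; cases c; simp)
  show "a + b = b + a" unfolding plus_E_def by (cases a; cases b; simp)
  show "0 + a = a" unfolding plus_E_def zero_E_def by simp
qed
end

instantiation E :: times
begin
definition times_E :: "E \<Rightarrow> E \<Rightarrow> E" where "times_E = E_mul"
instance ..
end

lemma E_UNIV: "(UNIV :: E set) = {EZ, EK, ET, EZt}"
  using E.exhaust by auto

instance E :: finite
  by standard (simp add: E_UNIV)

text \<open>Vectors of E^{2n}: functions nat => E vanishing from index 2n on.
  A vector x = (u|v) has u_i = x i and v_i = x (n+i) for i < n.\<close>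

definition E_vecs :: "nat \<Rightarrow> (nat \<Rightarrow> E) set" where
  "E_vecs n = {x. \<forall>i. 2 * n \<le> i \<longrightarrow> x i = 0}"

definition E_linear_code :: "nat \<Rightarrow> (nat \<Rightarrow> E) set \<Rightarrow> bool" where
  "E_linear_code n C \<longleftrightarrow> C \<subseteq> E_vecs n \<and> (\<lambda>_. 0) \<in> C
     \<and> (\<forall>x\<in>C. \<forall>y\<in>C. (\<lambda>i. x i + y i) \<in> C)
     \<and> (\<forall>e::E. \<forall>x\<in>C. (\<lambda>i. e * x i) \<in> C)"

definition symp :: "nat \<Rightarrow> (nat \<Rightarrow> E) \<Rightarrow> (nat \<Rightarrow> E) \<Rightarrow> E" where
  "symp n x y = (\<Sum>i<n. x i * y (n + i)) + (\<Sum>i<n. x (n + i) * y i)"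

definition perp_SL :: "nat \<Rightarrow> (nat \<Rightarrow> E) set \<Rightarrow> (nat \<Rightarrow> E) set" where
  "perp_SL n C = {z \<in> E_vecs n. \<forall>w\<in>C. symp n z w = 0}"

definition perp_SR :: "nat \<Rightarrow> (nat \<Rightarrow> E) set \<Rightarrow> (nat \<Rightarrow> E) set" where
  "perp_SR n C = {z \<in> E_vecs n. \<forall>w\<in>C. symp n w z = 0}"

definition left_symp_nice :: "nat \<Rightarrow> (nat \<Rightarrow> E) set \<Rightarrow> bool" where
  "left_symp_nice n C \<longleftrightarrow> card C * card (perp_SL n C) = card (UNIV :: E set) ^ (2 * n)"

definition right_symp_nice :: "nat \<Rightarrow> (nat \<Rightarrow> E) set \<Rightarrow> bool" where
  "right_symp_nice n C \<longleftrightarrow> card C * card (perp_SR n C) = card (UNIV :: E set) ^ (2 * n)"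

end

theory Submission
  imports Defs "HOL-Library.FuncSet"
begin

text \<open>Let A be the subcode of codewords with all entries in {0, zeta}, the left annihilator
  of kappa. For a codeword w both zeta w and w + kappa w lie in A, and kappa s = 0 iff
  zeta s = 0; since <w, z> = kappa <w, z> + <w + kappa w, z> and zeta <w, z> = <zeta w, z>,
  C and A have the same right symplectic orthogonal. For w in A the form <w, z> takes values
  in the two-element group {0, zeta}, so a double count of orthogonal pairs gives
  |A| |A^{perp_SR}| = |E|^{2n}, and right niceness forces C = A. But e zeta = 0 for every e,
  so A is left orthogonal to all of E^{2n}, and left niceness then forces |C| = 1.\<close>

instance E :: semiring_0
proof
  fix a b c :: E
  show "a * b * c = a * (b * c)" unfolding times_E_def by (cases a; cases b; cases c; simp)
  show "(a + b) * c = a * c + b * c" unfolding times_E_def plus_E_def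
    by (cases a; cases b; cases c; simp)
  show "a * (b + c) = a * b + a * c" unfolding times_E_def plus_E_def
    by (cases a; cases b; cases c; simp)
  show "0 * a = 0" unfolding times_E_def zero_E_def by (cases a; simp)
  show "a * 0 = 0" unfolding times_E_def zero_E_def by (cases a; simp)
qed

lemma E_add_self [simp]: "(x::E) + x = 0"
  by (cases x) (simp_all add: plus_E_def zero_E_def)

lemma mult_EK_right [simp]: "(x::E) * EK = x"
  by (simp add: times_E_def)

lemma EK_mult_eq_0_iff: "EK * x = 0 \<longleftrightarrow> x \<in> {0, EZt}"
  unfolding times_E_def zero_E_def by (cases x) simp_all

lemma EZt_mult_eq_0_iff: "EZt * x = 0 \<longleftrightarrow> x \<in> {0, EZt}"
  unfolding times_E_def zero_E_def by (cases x) simp_all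

lemma mult_zeta_right: "y \<in> {0, EZt} \<Longrightarrow> (x::E) * y = 0"
  unfolding times_E_def zero_E_def by auto

lemma E_decomp: "(x::E) = EK * x + (x + EK * x)"
  unfolding times_E_def plus_E_def by (cases x) simp_all

lemma zeta_add_EZt_eq_0_iff: "s \<in> {0, EZt} \<Longrightarrow> s + EZt = 0 \<longleftrightarrow> s \<noteq> 0"
  unfolding plus_E_def zero_E_def by auto

definition zeta_valued :: "(nat \<Rightarrow> E) \<Rightarrow> bool" where
  "zeta_valued w \<longleftrightarrow> (\<forall>i. w i \<in> {0, EZt})"

lemma zeta_valued_zero [simp]: "zeta_valued (\<lambda>_. 0)"
  by (simp add: zeta_valued_def)

lemma zeta_valued_add:
  assumes "zeta_valued x" and "zeta_valued y"
  shows "zeta_valued (\<lambda>i. x i + y i)"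
  unfolding zeta_valued_def
proof
  fix i
  have "x i \<in> {0, EZt}" and "y i \<in> {0, EZt}"
    using assms unfolding zeta_valued_def by auto
  then show "x i + y i \<in> {0, EZt}"
    by auto
qed

lemma zeta_valued_smult: "zeta_valued x \<Longrightarrow> zeta_valued (\<lambda>i. e * x i)"
  unfolding zeta_valued_def by (simp add: mult_zeta_right)

lemma zeta_valued_EZt_smult: "zeta_valued (\<lambda>i. EZt * w i)"
proof -
  have "EZt * x \<in> {0, EZt}" for x
    unfolding times_E_def zero_E_def by (cases x) simp_all
  then show ?thesis
    unfolding zeta_valued_def by blast
qed

lemma zeta_valued_add_EK_smult: "zeta_valued (\<lambda>i. w i + EK * w i)"
proof -
  have "x + EK * x \<in> {0, EZt}" for x :: E
    unfolding times_E_def plus_E_def zero_E_def by (cases x) simp_all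
  then show ?thesis
    unfolding zeta_valued_def by blast
qed

lemma card_E_vecs: "finite (E_vecs n)" "card (E_vecs n) = card (UNIV :: E set) ^ (2 * n)"
proof -
  let ?P = "PiE {..<2*n} (\<lambda>_. UNIV :: E set)"
  have "bij_betw (\<lambda>x. restrict x {..<2*n}) (E_vecs n) ?P"
  proof (rule bij_betw_byWitness[where f'="\<lambda>f i. if i < 2*n then f i else 0"])
    show "\<forall>x\<in>E_vecs n. (\<lambda>i. if i < 2*n then restrict x {..<2*n} i else 0) = x"
      unfolding E_vecs_def by (simp add: fun_eq_iff)
    show "\<forall>f\<in>?P. restrict (\<lambda>i. if i < 2*n then f i else 0) {..<2*n} = f"
      by (auto simp: fun_eq_iff intro: PiE_arb[symmetric])
    show "(\<lambda>x. restrict x {..<2*n}) ` E_vecs n \<subseteq> ?P"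
      by (simp add: image_subset_iff)
    show "(\<lambda>f i. if i < 2*n then f i else 0) ` ?P \<subseteq> E_vecs n"
      unfolding E_vecs_def by (simp add: image_subset_iff)
  qed
  then show "finite (E_vecs n)" "card (E_vecs n) = card (UNIV :: E set) ^ (2 * n)"
    by (simp_all add: bij_betw_finite bij_betw_same_card finite_PiE card_PiE)
qed

lemma symp_add_left: "symp n (\<lambda>i. x i + y i) z = symp n x z + symp n y z"
  unfolding symp_def by (simp add: sum.distrib distrib_right add_ac)

lemma symp_add_right: "symp n z (\<lambda>i. x i + y i) = symp n z x + symp n z y"
  unfolding symp_def by (simp add: sum.distrib distrib_left add_ac)

lemma symp_smult_left: "symp n (\<lambda>i. e * x i) z = e * symp n x z"
  unfolding symp_def by (simp add: sum_distrib_left distrib_left mult.assoc)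

lemma symp_zero_left [simp]: "symp n (\<lambda>_. 0) z = 0"
  unfolding symp_def by simp

lemma symp_zeta_valued_right: "zeta_valued w \<Longrightarrow> symp n z w = 0"
  unfolding symp_def zeta_valued_def by (simp add: mult_zeta_right)

lemma symp_zeta_valued_left:
  assumes "zeta_valued w"
  shows "symp n w z \<in> {0, EZt}"
proof -
  have "(\<lambda>i. EK * w i) = (\<lambda>_. 0)"
    using assms by (simp add: fun_eq_iff zeta_valued_def EK_mult_eq_0_iff)
  then have "EK * symp n w z = 0"
    by (metis symp_smult_left symp_zero_left)
  then show ?thesis
    by (simp add: EK_mult_eq_0_iff)
qed

definition E_unit :: "nat \<Rightarrow> nat \<Rightarrow> E" where
  "E_unit k = (\<lambda>i. if i = k then EK else 0)"

lemma E_unit_in_E_vecs: "k < 2 * n \<Longrightarrow> E_unit k \<in> E_vecs n"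
  unfolding E_unit_def E_vecs_def by auto

lemma symp_E_unit_upper: "j < n \<Longrightarrow> symp n w (E_unit (n + j)) = w j"
  unfolding symp_def E_unit_def by (simp add: if_distrib sum.delta cong: if_cong)

lemma symp_E_unit_lower: "j < n \<Longrightarrow> symp n w (E_unit j) = w (n + j)"
  unfolding symp_def E_unit_def by (simp add: if_distrib sum.delta cong: if_cong)

lemma exists_symp_eq_entry:
  assumes "w \<in> E_vecs n" and "w j \<noteq> 0"
  shows "\<exists>z\<in>E_vecs n. symp n w z = w j"
proof -
  have "j < 2 * n"
    using assms unfolding E_vecs_def by (metis (mono_tags) mem_Collect_eq not_le)
  show ?thesis
  proof (cases "j < n")
    case True
    then show ?thesis
      using E_unit_in_E_vecs[of "n + j" n] symp_E_unit_upper[of j n w] by auto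
  next
    case False
    with \<open>j < 2 * n\<close> obtain i where "j = n + i" and "i < n"
      by (metis add_diff_inverse_nat add_less_cancel_left mult_2)
    then show ?thesis
      using E_unit_in_E_vecs[of i n] symp_E_unit_lower[of i n w] by auto
  qed
qed

lemma card_filter_half_if_involution:
  assumes "finite S" and "\<And>x. x \<in> S \<Longrightarrow> g x \<in> S" and "\<And>x. x \<in> S \<Longrightarrow> g (g x) = x"
    and "\<And>x. x \<in> S \<Longrightarrow> P (g x) \<longleftrightarrow> \<not> P x"
  shows "2 * card {x\<in>S. P x} = card S"
proof -
  have "bij_betw g {x\<in>S. P x} {x\<in>S. \<not> P x}"
    by (rule bij_betw_byWitness[where f'=g]) (use assms in auto)
  then have "card {x\<in>S. P x} = card {x\<in>S. \<not> P x}"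
    by (rule bij_betw_same_card)
  moreover have "card ({x\<in>S. P x} \<union> {x\<in>S. \<not> P x}) = card {x\<in>S. P x} + card {x\<in>S. \<not> P x}"
    by (rule card_Un_disjoint) (use assms(1) in auto)
  moreover have "{x\<in>S. P x} \<union> {x\<in>S. \<not> P x} = S"
    by auto
  ultimately show ?thesis
    by simp
qed

lemma card_eq_card_annihilator_mult_card:
  fixes R :: "'a \<Rightarrow> 'b \<Rightarrow> bool"
  assumes fin: "finite A" "finite V"
    and zero: "zero \<in> A" "\<And>z. z \<in> V \<Longrightarrow> R zero z"
    and rows: "\<And>a. a \<in> A - {zero} \<Longrightarrow> 2 * card {z\<in>V. R a z} = card V"
    and cols: "\<And>z. z \<in> V \<Longrightarrow> \<not> (\<forall>a\<in>A. R a z) \<Longrightarrow> 2 * card {a\<in>A. R a z} = card A"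
  shows "card V = card {z\<in>V. \<forall>a\<in>A. R a z} * card A"
proof -
  define P where "P = {z\<in>V. \<forall>a\<in>A. R a z}"
  define N where "N = (\<Sum>a\<in>A. card {z\<in>V. R a z})"
  have N_cols: "N = (\<Sum>z\<in>V. card {a\<in>A. R a z})"
    unfolding N_def using sum.swap_restrict[OF fin, of "\<lambda>_ _. 1" R] by (simp only: card_eq_sum)
  have "2 * N = 2 * card V + card (A - {zero}) * card V"
  proof -
    have "N = card {z\<in>V. R zero z} + (\<Sum>a\<in>A - {zero}. card {z\<in>V. R a z})"
      unfolding N_def using sum.remove[OF fin(1) zero(1)] .
    moreover have "{z\<in>V. R zero z} = V"
      using zero(2) by auto
    ultimately show ?thesis
      by (simp add: sum_distrib_left rows)
  qed
  moreover have "2 * N = 2 * card P * card A + card (V - P) * card A"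
  proof -
    have "P \<subseteq> V"
      unfolding P_def by auto
    then have "N = (\<Sum>z\<in>V - P. card {a\<in>A. R a z}) + (\<Sum>z\<in>P. card {a\<in>A. R a z})"
      unfolding N_cols by (rule sum.subset_diff[OF _ fin(2)])
    moreover have "{a\<in>A. R a z} = A" if "z \<in> P" for z
      using that P_def by auto
    ultimately show ?thesis
      by (simp add: sum_distrib_left cols P_def)
  qed
  moreover have "card A = Suc (card (A - {zero}))"
    by (rule card_Suc_Diff1[OF fin(1) zero(1), symmetric])
  moreover have "card V = card P + card (V - P)"
    using fin(2) P_def by (simp add: card_Diff_subset card_mono)
  ultimately show ?thesis
    unfolding P_def[symmetric] by (simp add: algebra_simps)
qed

lemma zeta_subcode_linear:
  assumes "E_linear_code n C"
  shows "E_linear_code n {w\<in>C. zeta_valued w}"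
  using assms unfolding E_linear_code_def by (auto intro: zeta_valued_add zeta_valued_smult)

lemma card_E_vecs_eq_card_perp_SR_mult_card:
  assumes code: "E_linear_code n A" and zeta: "\<And>w. w \<in> A \<Longrightarrow> zeta_valued w"
  shows "card (E_vecs n) = card (perp_SR n A) * card A"
proof -
  have AV: "A \<subseteq> E_vecs n" and A0: "(\<lambda>_. 0) \<in> A"
    and A_add: "\<And>x y. x \<in> A \<Longrightarrow> y \<in> A \<Longrightarrow> (\<lambda>i. x i + y i) \<in> A"
    using code unfolding E_linear_code_def by auto
  have finA: "finite A"
    using AV card_E_vecs(1) finite_subset by blast
  have flip: "symp n w z + EZt = 0 \<longleftrightarrow> symp n w z \<noteq> 0" if "w \<in> A" for w z
    using zeta_add_EZt_eq_0_iff[OF symp_zeta_valued_left[OF zeta[OF that]]] .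
  have "card (E_vecs n) = card {z \<in> E_vecs n. \<forall>w\<in>A. symp n w z = 0} * card A"
  proof (rule card_eq_card_annihilator_mult_card[where zero="\<lambda>_. 0"])
    show "finite A" "finite (E_vecs n)"
      by (fact finA card_E_vecs(1))+
    show "(\<lambda>_. 0) \<in> A"
      by (rule A0)
    show "symp n (\<lambda>_. 0) z = 0" for z
      by simp
    show "2 * card {z \<in> E_vecs n. symp n w z = 0} = card (E_vecs n)"
      if w: "w \<in> A - {\<lambda>_. 0}" for w
    proof -
      obtain j where "w j \<noteq> 0"
        using w by (auto simp: fun_eq_iff)
      moreover have "w \<in> E_vecs n" and "zeta_valued w"
        using w AV zeta by auto
      ultimately obtain z0 where "z0 \<in> E_vecs n" and "symp n w z0 = EZt"
        using exists_symp_eq_entry unfolding zeta_valued_def by force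
      with w show ?thesis
        by (intro card_filter_half_if_involution[OF card_E_vecs(1), where g="\<lambda>z i. z i + z0 i"])
          (auto simp: E_vecs_def add.assoc symp_add_right flip)
    qed
    show "2 * card {w \<in> A. symp n w z = 0} = card A"
      if "\<not> (\<forall>w\<in>A. symp n w z = 0)" for z
    proof -
      obtain w1 where "w1 \<in> A" and "symp n w1 z \<noteq> 0"
        using \<open>\<not> (\<forall>w\<in>A. symp n w z = 0)\<close> by auto
      then have "symp n w1 z = EZt"
        using symp_zeta_valued_left[OF zeta] by blast
      with \<open>w1 \<in> A\<close> show ?thesis
        by (intro card_filter_half_if_involution[OF finA, where g="\<lambda>w i. w i + w1 i"])
          (auto simp: add.assoc symp_add_left flip A_add)
    qed
  qed
  then show ?thesis
    unfolding perp_SR_def by simp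
qed

lemma perp_SR_zeta_subcode:
  assumes "E_linear_code n C"
  shows "perp_SR n {w\<in>C. zeta_valued w} = perp_SR n C"
proof
  have C_add: "\<And>x y. x \<in> C \<Longrightarrow> y \<in> C \<Longrightarrow> (\<lambda>i. x i + y i) \<in> C"
    and C_smult: "\<And>e x. x \<in> C \<Longrightarrow> (\<lambda>i. e * x i) \<in> C"
    using assms unfolding E_linear_code_def by auto
  show "perp_SR n C \<subseteq> perp_SR n {w\<in>C. zeta_valued w}"
    unfolding perp_SR_def by auto
  show "perp_SR n {w\<in>C. zeta_valued w} \<subseteq> perp_SR n C"
  proof
    fix z
    assume z: "z \<in> perp_SR n {w\<in>C. zeta_valued w}"
    have "symp n w z = 0" if "w \<in> C" for w
    proof -
      have "symp n (\<lambda>i. EZt * w i) z = 0"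
        using z C_smult[OF that] zeta_valued_EZt_smult unfolding perp_SR_def by blast
      then have kappa_part: "EK * symp n w z = 0"
        by (simp add: symp_smult_left EZt_mult_eq_0_iff EK_mult_eq_0_iff)
      have zeta_part: "symp n (\<lambda>i. w i + EK * w i) z = 0"
        using z C_add[OF that C_smult[OF that]] zeta_valued_add_EK_smult
        unfolding perp_SR_def by blast
      have "symp n w z = symp n (\<lambda>i. EK * w i + (w i + EK * w i)) z"
        by (simp only: E_decomp[symmetric])
      also have "\<dots> = EK * symp n w z + symp n (\<lambda>i. w i + EK * w i) z"
        by (simp only: symp_add_left symp_smult_left)
      also have "\<dots> = 0"
        by (simp only: kappa_part zeta_part add_0)
      finally show ?thesis .
    qed
    with z show "z \<in> perp_SR n C"
      unfolding perp_SR_def by auto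
  qed
qed

lemma perp_SL_zeta_valued:
  "(\<And>w. w \<in> A \<Longrightarrow> zeta_valued w) \<Longrightarrow> perp_SL n A = E_vecs n"
  unfolding perp_SL_def by (auto simp: symp_zeta_valued_right)

theorem mainTheorem12:
  fixes n :: nat and C :: "(nat \<Rightarrow> E) set"
  assumes "E_linear_code n C" and "C \<noteq> {\<lambda>_. 0}"
  shows "\<not> (left_symp_nice n C \<and> right_symp_nice n C)"
proof
  assume "left_symp_nice n C \<and> right_symp_nice n C"
  then have left: "card C * card (perp_SL n C) = card (E_vecs n)"
    and right: "card C * card (perp_SR n C) = card (E_vecs n)"
    unfolding left_symp_nice_def right_symp_nice_def by (simp_all add: card_E_vecs)
  define A where "A = {w\<in>C. zeta_valued w}"
  have C0: "(\<lambda>_. 0) \<in> C" and CV: "C \<subseteq> E_vecs n"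
    using assms(1) unfolding E_linear_code_def by auto
  have "finite (perp_SR n C)" and "(\<lambda>_. 0) \<in> perp_SR n C"
    using card_E_vecs(1) by (auto simp: perp_SR_def E_vecs_def symp_zeta_valued_right)
  then have "card (perp_SR n C) > 0"
    by (auto simp: card_gt_0_iff)
  moreover have "card (E_vecs n) = card (perp_SR n C) * card A"
    using card_E_vecs_eq_card_perp_SR_mult_card[OF zeta_subcode_linear[OF assms(1)]]
      perp_SR_zeta_subcode[OF assms(1)] unfolding A_def by simp
  ultimately have "card A = card C"
    using right by (simp add: mult.commute)
  then have "A = C"
    using card_subset_eq[of C A] CV card_E_vecs(1) finite_subset unfolding A_def by blast
  then have "perp_SL n C = E_vecs n"
    using perp_SL_zeta_valued[of C n] unfolding A_def by blast
  moreover have "card (E_vecs n) > 0"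
    using C0 CV card_E_vecs(1) by (auto simp: card_gt_0_iff)
  ultimately have "card C = 1"
    using left by simp
  then show False
    using C0 assms(2) by (metis card_1_singletonE singletonD)
qed

end
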